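(* Let $n\ge2$, $l\ge1$, $\mathfrak g=C^{(1)}_n$, $B$ the level-$l$ perfect crystal of the context, $\lambda=l\Lambda_0$, $d=2n$, and $i^{(j)}_a=a-1$ for $1\le a\le n+1$, $i^{(j)}_a=2n+1-a$ for $n+2\le a\le 2n$ (all $j\ge1$). Then: (II) $B^{(j)}_d=B$ for all $j\ge1$; (III) $\langle\lambda_j,h_{i^{(j)}_a}\rangle\le\varepsilon_{i^{(j)}_a}(b)$ for all $j\ge1$, $1\le a\le d$, $b\in B^{(j)}_{a-1}$; (IV') for all $j\ge1$, $a=1,\dots,d$: $\varepsilon_{i^{(j)}_{a+1}}(b^{(j)}_a)=0$, $\varphi_{i^{(j)}_{a+1}}(b^{(j)}_a)>0$ (with $i^{(j)}_{d+1}:=i^{(j+1)}_1$), and $b^{(j+1)}_0=\tilde f_{i^{(j+1)}_1}^mb^{(j)}_d$ with $m=\langle\lambda_{j+1},h_{i^{(j+1)}_1}\rangle$. Moreover $B^{(j)}_0=\{(0,\dots,0)\}$, $B^{(j)}_{2n}=B$; for $1\le a\le n$, $B^{(j)}_a$ is the set of $b\in B$ with all coordinates $0$ except possibly $x_1,\dots,x_a$; for $1\le a\le n-1$, $B^{(j)}_{n+a}$ is the set of $b\in B$ with all coordinates $0$ except possibly $x_1,\dots,x_n,\bar x_n,\dots,\bar x_{n-a+1}$. Also $b^{(j)}_0=(0,\dots,0)$, and for $1\le a\le n$, $b^{(j)}_a$ has $x_a=2l$ and $b^{(j)}_{n+a}$ has $\bar x_{n-a+1}=2l$, all other coordinates 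$0$.
   Context: $(x)_+=\max(x,0)$. $B=\{(x_1,\dots,x_n,\bar x_n,\dots,\bar x_1)\in\mathbb Z^{2n}: x_i,\bar x_i\ge0,\ \sum_{i=1}^n(x_i+\bar x_i)\le 2l,\ \sum_{i=1}^n(x_i+\bar x_i)\in2\mathbb Z\}$. Crystal structure: $\tilde f_0b=(x_1+2,x_2,\dots,\bar x_2,\bar x_1)$ if $x_1\ge\bar x_1$, $(x_1+1,x_2,\dots,\bar x_2,\bar x_1-1)$ if $x_1=\bar x_1-1$, $(x_1,x_2,\dots,\bar x_2,\bar x_1-2)$ if $x_1\le\bar x_1-2$; for $1\le i\le n-1$, $\tilde f_ib$ replaces $(x_i,x_{i+1})$ by $(x_i-1,x_{i+1}+1)$ if $x_{i+1}\ge\bar x_{i+1}$, and $(\bar x_{i+1},\bar x_i)$ by $(\bar x_{i+1}-1,\bar x_i+1)$ if $x_{i+1}<\bar x_{i+1}$; $\tilde f_nb$ replaces $(x_n,\bar x_n)$ by $(x_n-1,\bar x_n+1)$; $\tilde e_ib=b'$ iff $\tilde f_ib'=b$; results outside $B$ mean $0$. With $s(b)=\sum_{i=1}^n(x_i+\bar x_i)$: $\varphi_0(b)=l-\tfrac12s(b)+(\bar x_1-x_1)_+$, $\varepsilon_0(b)=l-\tfrac12 s(b)+(x_1-\bar x_1)_+$; $\varphi_i(b)=x_i+(\bar x_{i+1}-x_{i+1})_+$, $\varepsilon_i(b)=\bar x_i+(x_{i+1}-\bar x_{i+1})_+$ ($1\le i\le n-1$); $\varphi_n(b)=x_n$, $\varepsilon_n(b)=\bar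 x_n$. For $\lambda=l\Lambda_0$: $\lambda_j=l\Lambda_0$ and $\overline b_j=(0,\dots,0)$ for all $j$; $\langle\lambda_j,h_i\rangle$ is the coefficient of $\Lambda_i$ in $\lambda_j$. Given $d$, $i^{(j)}_a$: $B^{(j)}_0=\{\overline b_j\}$, $B^{(j)}_a=\bigcup_{n\ge0}\tilde f_{i^{(j)}_a}^nB^{(j)}_{a-1}\setminus\{0\}$; $b^{(j)}_0=\overline b_j$, $b^{(j)}_a=\tilde f_{i^{(j)}_a}^{\varphi_{i^{(j)}_a}(b^{(j)}_{a-1})}b^{(j)}_{a-1}$. *)

theory Defs
  imports Main
begin

text \<open>Crystal elements of B for C_n^(1) are encoded as int lists of length 2n:
  position i-1 holds x_i (1 \<le> i \<le> n), position 2n-i holds xbar_i (1 \<le> i \<le> n),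
  i.e. the list is (x_1,...,x_n,xbar_n,...,xbar_1).  The crystal operators return
  an option; None represents 0.\<close>

definition xc :: "int list \<Rightarrow> nat \<Rightarrow> int" where
  "xc b i = b ! (i - 1)"

definition xbar :: "nat \<Rightarrow> int list \<Rightarrow> nat \<Rightarrow> int" where
  "xbar n b i = b ! (2*n - i)"

definition crysB :: "nat \<Rightarrow> nat \<Rightarrow> int list set" where
  "crysB n l = {b. length b = 2*n \<and> (\<forall>v\<in>set b. 0 \<le> v)
       \<and> sum_list b \<le> 2 * int l \<and> even (sum_list b)}"

definition sB :: "int list \<Rightarrow> int" where
  "sB b = sum_list b"

definition upd :: "int list \<Rightarrow> nat \<Rightarrow> int \<Rightarrow> int list" where
  "upd b p d = b[p := b ! p + d]"

definition fraw :: "nat \<Rightarrow> nat \<Rightarrow> int list \<Rightarrow> int list" where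
  "fraw n i b =
    (if i = 0 then
       (if xc b 1 \<ge> xbar n b 1 then upd b 0 2
        else if xc b 1 = xbar n b 1 - 1 then upd (upd b 0 1) (2*n - 1) (-1)
        else upd b (2*n - 1) (-2))
     else if i < n then
       (if xc b (i+1) \<ge> xbar n b (i+1)
        then upd (upd b (i - 1) (-1)) i 1
        else upd (upd b (2*n - (i+1)) (-1)) (2*n - i) 1)
     else upd (upd b (n - 1) (-1)) n 1)"

definition ftil :: "nat \<Rightarrow> nat \<Rightarrow> nat \<Rightarrow> int list \<Rightarrow> int list option" where
  "ftil n l i b = (if b \<in> crysB n l \<and> fraw n i b \<in> crysB n l
                   then Some (fraw n i b) else None)"

definition etil :: "nat \<Rightarrow> nat \<Rightarrow> nat \<Rightarrow> int list \<Rightarrow> int list option" where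
  "etil n l i b = (if \<exists>b'. ftil n l i b' = Some b
                   then Some (THE b'. ftil n l i b' = Some b) else None)"

fun fpow :: "nat \<Rightarrow> nat \<Rightarrow> nat \<Rightarrow> nat \<Rightarrow> int list \<Rightarrow> int list option" where
  "fpow n l i 0 b = Some b"
| "fpow n l i (Suc k) b = Option.bind (fpow n l i k b) (ftil n l i)"

definition pos :: "int \<Rightarrow> int" where "pos x = max x 0"

definition phi :: "nat \<Rightarrow> nat \<Rightarrow> nat \<Rightarrow> int list \<Rightarrow> int" where
  "phi n l i b =
    (if i = 0 then int l - sB b div 2 + pos (xbar n b 1 - xc b 1)
     else if i < n then xc b i + pos (xbar n b (i+1) - xc b (i+1))
     else xc b n)"

definition eps :: "nat \<Rightarrow> nat \<Rightarrow> nat \<Rightarrow> int list \<Rightarrow> int" where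
  "eps n l i b =
    (if i = 0 then int l - sB b div 2 + pos (xc b 1 - xbar n b 1)
     else if i < n then xbar n b i + pos (xc b (i+1) - xbar n b (i+1))
     else xbar n b n)"

text \<open>lambda = l Lambda_0, lambda_j = l Lambda_0; <lambda_j, h_i> = coefficient of Lambda_i.\<close>
definition lamh :: "nat \<Rightarrow> nat \<Rightarrow> nat \<Rightarrow> int" where
  "lamh l j i = (if i = 0 then int l else 0)"

definition bbar :: "nat \<Rightarrow> nat \<Rightarrow> int list" where
  "bbar n j = replicate (2*n) 0"

definition idx :: "nat \<Rightarrow> nat \<Rightarrow> nat \<Rightarrow> nat" where
  "idx n j a = (if a \<le> n + 1 then a - 1 else 2*n + 1 - a)"

primrec Bset :: "nat \<Rightarrow> nat \<Rightarrow> nat \<Rightarrow> nat \<Rightarrow> int list set" where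
  "Bset n l j 0 = {bbar n j}"
| "Bset n l j (Suc a) =
     {c. \<exists>b\<in>Bset n l j a. \<exists>k. fpow n l (idx n j (Suc a)) k b = Some c}"

primrec bseq :: "nat \<Rightarrow> nat \<Rightarrow> nat \<Rightarrow> nat \<Rightarrow> int list option" where
  "bseq n l j 0 = Some (bbar n j)"
| "bseq n l j (Suc a) =
     Option.bind (bseq n l j a)
       (\<lambda>b. fpow n l (idx n j (Suc a)) (nat (phi n l (idx n j (Suc a)) b)) b)"

definition idx_next :: "nat \<Rightarrow> nat \<Rightarrow> nat \<Rightarrow> nat" where
  "idx_next n j a = (if a < 2*n then idx n j (a+1) else idx n (j+1) 1)"

end

theory Submission
  imports Defs
begin

text \<open>
  Every operator f_i with i > 0 moves one unit from an entry to the next one, and on the elements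
  met here f_0 adds 2 to x_1 or removes 2 from xbar_1. For a < 2n the operator f_(i_(a+1)) only touches entries up to
  a + 1, so it preserves "supported on the first a + 1 entries"; conversely every such element is
  reached from one supported on the first a entries by pushing mass into entry a + 1. Hence
  B^(j)_a is exactly the set of elements supported on the first a entries. The elements b^(j)_a are
  the spikes with 2l in entry a; f_(i_(a+1)) with phi = 2l moves the spike one entry to the right,
  and the remaining statements are read off from these spikes.
\<close>

lemma sum_list_list_update:
  fixes xs :: "'a::ab_group_add list"
  shows "k < length xs \<Longrightarrow> sum_list (xs[k := x]) = sum_list xs + x - xs ! k"
  by (induction xs arbitrary: k) (auto split: nat.splits)

lemma crysB_iff:
  "b \<in> crysB n l \<longleftrightarrow> length b = 2*n \<and> (\<forall>q<2*n. 0 \<le> b!q)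
     \<and> sum_list b \<le> 2 * int l \<and> even (sum_list b)"
  unfolding crysB_def by (auto simp: in_set_conv_nth) (metis nth_mem)

lemma replicate_update_in_crysB:
  assumes "p < 2*n" "0 \<le> v" "v \<le> 2 * int l" "even v"
  shows "(replicate (2*n) 0)[p := v] \<in> crysB n l"
  using assms by (auto simp: crysB_iff nth_list_update sum_list_list_update sum_list_replicate)

lemma ftil_eq_SomeI:
  "b \<in> crysB n l \<Longrightarrow> fraw n i b \<in> crysB n l \<Longrightarrow> ftil n l i b = Some (fraw n i b)"
  by (simp add: ftil_def)

lemma ftil_eq_SomeD: "ftil n l i b = Some c \<Longrightarrow> c = fraw n i b \<and> c \<in> crysB n l"
  by (auto simp: ftil_def split: if_splits)

lemma fpow_add: "fpow n l i (k + m) b = Option.bind (fpow n l i k b) (fpow n l i m)"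
  by (induction m) (auto split: Option.bind_splits)

lemma fpow_invariant:
  assumes "\<And>b c. b \<in> S \<Longrightarrow> ftil n l i b = Some c \<Longrightarrow> c \<in> S"
  shows "b \<in> S \<Longrightarrow> fpow n l i k b = Some c \<Longrightarrow> c \<in> S"
  using assms by (induction k arbitrary: c) (auto split: Option.bind_splits)

section \<open>Crystal operators as transfers between adjacent entries\<close>

definition transfer :: "int list \<Rightarrow> nat \<Rightarrow> int \<Rightarrow> int list" where
  "transfer b p k = b[p := b!p - k, Suc p := b!Suc p + k]"

lemma length_transfer [simp]: "length (transfer b p k) = length b"
  by (simp add: transfer_def)

lemma nth_transfer:
  "Suc p < length b \<Longrightarrow>
     transfer b p k ! q = (if q = p then b!p - k else if q = Suc p then b!Suc p + k else b!q)"
  by (simp add: transfer_def nth_list_update)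

lemma transfer_0 [simp]: "transfer b p 0 = b"
  by (simp add: transfer_def)

lemma transfer_transfer:
  "Suc p < length b \<Longrightarrow> transfer (transfer b p j) p k = transfer b p (j + k)"
  by (rule nth_equalityI) (simp_all add: nth_transfer)

lemma transfer_in_crysB:
  assumes "b \<in> crysB n l" "Suc p < 2*n" "k \<le> b!p" "0 \<le> b!Suc p + k"
  shows "transfer b p k \<in> crysB n l"
proof -
  have "sum_list (transfer b p k) = sum_list b"
    using assms by (simp add: transfer_def crysB_iff sum_list_list_update nth_list_update)
  then show ?thesis using assms by (auto simp: crysB_iff nth_transfer)
qed

lemma fraw_0_raise: "b!(2*n-1) \<le> b!0 \<Longrightarrow> fraw n 0 b = b[0 := b!0 + 2]"
  by (simp add: fraw_def xc_def xbar_def upd_def)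

lemma fraw_0_lower: "b!0 + 2 \<le> b!(2*n-1) \<Longrightarrow> fraw n 0 b = b[2*n-1 := b!(2*n-1) - 2]"
  by (simp add: fraw_def xc_def xbar_def upd_def)

lemma fraw_x:
  "0 < i \<Longrightarrow> i < n \<Longrightarrow> b!(2*n-i-1) \<le> b!i \<Longrightarrow> fraw n i b = transfer b (i-1) 1"
  by (simp add: fraw_def xc_def xbar_def upd_def transfer_def nth_list_update)

lemma fraw_xbar:
  "0 < i \<Longrightarrow> i < n \<Longrightarrow> b!i < b!(2*n-i-1) \<Longrightarrow> fraw n i b = transfer b (2*n-i-1) 1"
  by (simp add: fraw_def xc_def xbar_def upd_def transfer_def nth_list_update Suc_diff_Suc)

lemma fraw_n: "0 < n \<Longrightarrow> fraw n n b = transfer b (n-1) 1"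
  by (simp add: fraw_def upd_def transfer_def nth_list_update)

lemma fraw_idx_transfer:
  assumes "0 < a" "a < 2*n"
    and "a < n \<Longrightarrow> b!(2*n-a-1) \<le> b!a"
    and "n < a \<Longrightarrow> b!(2*n-a) < b!(a-1)"
  shows "fraw n (idx n j (Suc a)) b = transfer b (a-1) 1"
proof -
  consider "a < n" | "a = n" | "n < a" by linarith
  then show ?thesis
  proof cases
    case 1
    then show ?thesis using assms fraw_x[of a n b] by (simp add: idx_def)
  next
    case 2
    then show ?thesis using assms fraw_n[of n b] by (simp add: idx_def)
  next
    case 3
    then have "idx n j (Suc a) = 2*n - a" "2*n - (2*n-a) - 1 = a - 1"
      using assms(2) by (auto simp: idx_def)
    then show ?thesis using assms 3 fraw_xbar[of "2*n-a" n b] by simp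
  qed
qed

lemma fpow_transfer:
  assumes "c \<in> crysB n l" "Suc p < 2*n" "int k \<le> c!p"
    and "\<And>s. s < k \<Longrightarrow> fraw n i (transfer c p (int s)) = transfer (transfer c p (int s)) p 1"
  shows "fpow n l i k c = Some (transfer c p (int k))"
  using assms(3,4)
proof (induction k)
  case (Suc k)
  have len: "Suc p < length c" using assms(1,2) by (simp add: crysB_iff)
  have "0 \<le> c!Suc p" using assms(1,2) by (simp add: crysB_iff)
  then have mem: "transfer c p (int m) \<in> crysB n l" if "m \<le> Suc k" for m
    using transfer_in_crysB[OF assms(1,2)] that Suc.prems(1) by simp
  have "fraw n i (transfer c p (int k)) = transfer c p (int (Suc k))"
    using Suc.prems(2)[of k] len by (simp add: transfer_transfer add.commute)
  then show ?case
    using Suc mem[of k] mem[of "Suc k"] ftil_eq_SomeI[of "transfer c p (int k)" n l i] by simp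
qed simp

lemma fpow_0_raise_x1:
  assumes "0 < n"
  shows "k \<le> l \<Longrightarrow>
    fpow n l 0 k (replicate (2*n) 0) = Some ((replicate (2*n) 0)[0 := 2 * int k])"
proof (induction k)
  case (Suc k)
  let ?b = "(replicate (2*n) 0)[0 := 2 * int k]"
  have "fraw n 0 ?b = (replicate (2*n) 0)[0 := 2 * int (Suc k)]"
    using assms fraw_0_raise[of ?b n] by (simp add: add.commute)
  then show ?case
    using Suc assms ftil_eq_SomeI[of ?b n l 0] replicate_update_in_crysB[of 0 n] by simp
qed (auto intro!: nth_equalityI simp: nth_list_update)

section \<open>The sets B^(j)_a\<close>

definition crysB_prefix :: "nat \<Rightarrow> nat \<Rightarrow> nat \<Rightarrow> int list set" where
  "crysB_prefix n l a = {b \<in> crysB n l. \<forall>q. a \<le> q \<longrightarrow> q < 2*n \<longrightarrow> b!q = 0}"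

lemma crysB_prefix_0: "crysB_prefix n l 0 = {replicate (2*n) 0}"
  by (auto simp: crysB_prefix_def crysB_iff sum_list_replicate intro!: nth_equalityI)

lemma crysB_prefix_2n: "crysB_prefix n l (2*n) = crysB n l"
  by (auto simp: crysB_prefix_def)

lemma crysB_prefix_mono: "a \<le> a' \<Longrightarrow> crysB_prefix n l a \<subseteq> crysB_prefix n l a'"
  by (auto simp: crysB_prefix_def)

lemma crysB_prefix_low:
  assumes "a \<le> n"
  shows "crysB_prefix n l a =
    {b\<in>crysB n l. (\<forall>i\<in>{a+1..n}. xc b i = 0) \<and> (\<forall>i\<in>{1..n}. xbar n b i = 0)}"
proof -
  have "(\<forall>q. a \<le> q \<longrightarrow> q < 2*n \<longrightarrow> b!q = 0) \<longleftrightarrow>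
      (\<forall>i\<in>{a+1..n}. b!(i-1) = 0) \<and> (\<forall>i\<in>{1..n}. b!(2*n-i) = 0)" for b :: "int list"
  proof safe
    fix q assume x: "\<forall>i\<in>{a+1..n}. b!(i-1) = 0" and xbar: "\<forall>i\<in>{1..n}. b!(2*n-i) = 0"
      and q: "a \<le> q" "q < 2*n"
    show "b!q = 0"
    proof (cases "q < n")
      case True
      then show ?thesis using x q by (auto dest: bspec[of _ _ "Suc q"])
    next
      case False
      then have "2*n-q \<in> {1..n}" "2*n-(2*n-q) = q" using q by auto
      then show ?thesis using xbar by metis
    qed
  qed (use assms in auto)
  then show ?thesis by (simp add: crysB_prefix_def xc_def xbar_def)
qed

lemma crysB_prefix_high:
  assumes "a \<le> n"
  shows "crysB_prefix n l (n+a) = {b\<in>crysB n l. \<forall>i\<in>{1..n-a}. xbar n b i = 0}"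
proof -
  have "(\<forall>q. n+a \<le> q \<longrightarrow> q < 2*n \<longrightarrow> b!q = 0) \<longleftrightarrow> (\<forall>i\<in>{1..n-a}. b!(2*n-i) = 0)"
    for b :: "int list"
  proof safe
    fix q assume xbar: "\<forall>i\<in>{1..n-a}. b!(2*n-i) = 0" and q: "n+a \<le> q" "q < 2*n"
    then have "2*n-q \<in> {1..n-a}" "2*n-(2*n-q) = q" by auto
    then show "b!q = 0" using xbar by metis
  qed (use assms in auto)
  then show ?thesis by (simp add: crysB_prefix_def xbar_def)
qed

lemma ftil_idx_preserves_crysB_prefix:
  assumes n: "0 < n" and a: "a < 2*n" and b: "b \<in> crysB_prefix n l (Suc a)"
    and c: "ftil n l (idx n j (Suc a)) b = Some c"
  shows "c \<in> crysB_prefix n l (Suc a)"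
proof -
  have c_eq: "c = fraw n (idx n j (Suc a)) b" and cB: "c \<in> crysB n l" using ftil_eq_SomeD[OF c] by auto
  have len: "length b = 2*n" and nonneg: "\<And>q. q < 2*n \<Longrightarrow> 0 \<le> b!q"
    and zero: "\<And>q. Suc a \<le> q \<Longrightarrow> q < 2*n \<Longrightarrow> b!q = 0"
    using b by (auto simp: crysB_prefix_def crysB_iff)
  have "c!q = b!q" if q: "Suc a \<le> q" "q < 2*n" for q
  proof -
    consider "a = 0" | "0 < a" "a \<le> n" | "n < a" "b!(2*n-a) < b!(a-1)" | "n < a" "b!(a-1) \<le> b!(2*n-a)"
      by linarith
    then show ?thesis
    proof cases
      case 1
      then have "c = b[0 := b!0 + 2]"
        using c_eq fraw_0_raise[of b n] zero[of "2*n-1"] nonneg[of 0] n by (simp add: idx_def)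
      then show ?thesis using q 1 by simp
    next
      case 2
      then have "c = transfer b (a-1) 1"
        using c_eq fraw_idx_transfer[of a n b] a zero[of "2*n-a-1"] nonneg[of a] by simp
      then show ?thesis using q 2 len by (simp add: nth_transfer)
    next
      case 3
      then have "c = transfer b (a-1) 1" using c_eq fraw_idx_transfer[of a n b] a by simp
      then show ?thesis using q 3 len by (simp add: nth_transfer)
    next
      case 4
      then have "idx n j (Suc a) = 2*n - a" "2*n - (2*n-a) - 1 = a - 1" using a by (auto simp: idx_def)
      then have "c = transfer b (2*n-a-1) 1" using c_eq fraw_x[of "2*n-a" n b] a 4 by simp
      then show ?thesis using q 4 len by (simp add: nth_transfer; linarith)
    qed
  qed
  then show ?thesis using cB zero by (simp add: crysB_prefix_def)
qed

lemma crysB_prefix_reachable_0: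
  assumes n: "0 < n" and c: "c \<in> crysB_prefix n l 1"
  shows "\<exists>b\<in>crysB_prefix n l 0. \<exists>k. fpow n l 0 k b = Some c"
proof -
  have len: "length c = 2*n" and zero: "\<forall>q<2*n. q \<noteq> 0 \<longrightarrow> c!q = 0"
    and "sum_list c \<le> 2 * int l" "even (sum_list c)" "0 \<le> c!0"
    using c n by (auto simp: crysB_prefix_def crysB_iff)
  moreover have c_eq: "c = (replicate (2*n) 0)[0 := c!0]"
    using len zero by (auto intro!: nth_equalityI simp: nth_list_update)
  moreover have "sum_list c = c!0"
    using n by (subst c_eq) (simp add: sum_list_list_update sum_list_replicate)
  ultimately have "c = (replicate (2*n) 0)[0 := 2 * int (nat (c!0 div 2))]" "nat (c!0 div 2) \<le> l"
    by auto
  then show ?thesis using fpow_0_raise_x1[OF n] crysB_prefix_0 by fastforce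
qed

lemma crysB_prefix_reachable_low:
  assumes a: "0 < a" "a \<le> n" and c: "c \<in> crysB_prefix n l (Suc a)"
  shows "\<exists>b\<in>crysB_prefix n l a. \<exists>k. fpow n l (idx n j (Suc a)) k b = Some c"
proof -
  have cB: "c \<in> crysB n l" and len: "length c = 2*n" and nonneg: "\<And>q. q < 2*n \<Longrightarrow> 0 \<le> c!q"
    and zero: "\<And>q. Suc a \<le> q \<Longrightarrow> q < 2*n \<Longrightarrow> c!q = 0"
    using c by (auto simp: crysB_prefix_def crysB_iff)
  define b where "b = transfer c (a-1) (- c!a)"
  have pos: "Suc (a-1) = a" "a < 2*n" using a by auto
  have bB: "b \<in> crysB n l" unfolding b_def
    using transfer_in_crysB[OF cB, of "a-1" "- c!a"] nonneg[of a] nonneg[of "a-1"] pos by simp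
  have "b \<in> crysB_prefix n l a"
    using bB zero len pos by (auto simp: crysB_prefix_def b_def nth_transfer)
  moreover have "fpow n l (idx n j (Suc a)) (nat (c!a)) b = Some c"
  proof -
    have "fraw n (idx n j (Suc a)) (transfer b (a-1) (int s))
        = transfer (transfer b (a-1) (int s)) (a-1) 1" for s
    proof -
      let ?b = "transfer b (a-1) (int s)"
      have "?b!(2*n-a-1) \<le> ?b!a" if "a < n"
      proof -
        have "Suc a \<le> 2*n-a-1" using that by simp
        then show ?thesis using zero[of "2*n-a-1"] len pos by (simp add: b_def nth_transfer)
      qed
      then show ?thesis using fraw_idx_transfer[of a n ?b] pos a by simp
    qed
    then show ?thesis
      using fpow_transfer[OF bB, of "a-1" "nat (c!a)"] pos len nonneg[of "a-1"] nonneg[of a]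
      by (simp add: b_def nth_transfer transfer_transfer)
  qed
  ultimately show ?thesis by blast
qed

lemma crysB_prefix_reachable_high:
  assumes a: "n < a" "a < 2*n" and c: "c \<in> crysB_prefix n l (Suc a)"
  shows "\<exists>b\<in>crysB_prefix n l a. \<exists>k. fpow n l (idx n j (Suc a)) k b = Some c"
proof -
  have cB: "c \<in> crysB n l" and len: "length c = 2*n" and nonneg: "\<And>q. q < 2*n \<Longrightarrow> 0 \<le> c!q"
    and zero: "\<And>q. Suc a \<le> q \<Longrightarrow> q < 2*n \<Longrightarrow> c!q = 0"
    using c by (auto simp: crysB_prefix_def crysB_iff)
  define i where "i = 2*n - a"
  txt \<open>f_i feeds entry a (that is, xbar_i) only while x_(i+1) < xbar_(i+1). So in the start
    element the excess S of x_(i+1) over xbar_(i+1) is moved back into x_i; f_i first fills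
    entry a and then moves S forward again.\<close>
  have i: "0 < i" "i < n" "Suc (i-1) = i" "i < a-1" "Suc (a-1) = a" "2*n-i-1 = a-1"
    "idx n j (Suc a) = i" using a by (auto simp: i_def idx_def)
  define S where "S = max (c!i - c!(a-1)) 0"
  define m where "m = transfer c (i-1) (- S)"
  define b where "b = transfer m (a-1) (- c!a)"
  have c_nonneg: "0 \<le> c!(i-1)" "0 \<le> c!i" "0 \<le> c!(a-1)" "0 \<le> c!a"
    using nonneg i a by auto
  have mB: "m \<in> crysB n l" unfolding m_def S_def
    using transfer_in_crysB[OF cB, of "i-1"] c_nonneg i a by simp
  have m_nth: "m!(a-1) = c!(a-1)" "m!a = c!a" "m!i = min (c!i) (c!(a-1))" "m!(i-1) = c!(i-1) + S"
    using i a len by (auto simp: m_def S_def nth_transfer)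
  have len_m: "length m = 2*n" using len by (simp add: m_def)
  have bB: "b \<in> crysB n l" unfolding b_def
    using transfer_in_crysB[OF mB, of "a-1" "- c!a"] c_nonneg m_nth a i by simp
  have "b \<in> crysB_prefix n l a"
    using bB zero len i a by (auto simp: crysB_prefix_def b_def m_def nth_transfer)
  moreover have "fpow n l i (nat (c!a)) b = Some m"
  proof -
    have "fraw n i (transfer b (a-1) (int s)) = transfer (transfer b (a-1) (int s)) (a-1) 1"
      if "s < nat (c!a)" for s
    proof -
      let ?b = "transfer b (a-1) (int s)"
      have "?b!(2*n-a) < ?b!(a-1)"
        using that i a len_m m_nth c_nonneg
        by (simp add: b_def nth_transfer i_def[symmetric] zless_nat_eq_int_zless min_def)
      then show ?thesis using fraw_idx_transfer[of a n ?b j] i a by simp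
    qed
    then show ?thesis
      using fpow_transfer[OF bB, of "a-1" "nat (c!a)" i] i(1-6) a len_m c_nonneg m_nth
      by (simp add: b_def nth_transfer transfer_transfer)
  qed
  moreover have "fpow n l i (nat S) m = Some c"
  proof -
    have "fraw n i (transfer m (i-1) (int s)) = transfer (transfer m (i-1) (int s)) (i-1) 1"
      if "s < nat S" for s
    proof -
      let ?m = "transfer m (i-1) (int s)"
      have "?m!(2*n-i-1) \<le> ?m!i"
        using that i(1-6) len_m m_nth by (auto simp: nth_transfer S_def min_def max_def)
      then show ?thesis using fraw_x[of i n ?m] i by simp
    qed
    then show ?thesis
      using fpow_transfer[OF mB, of "i-1" "nat S" i] i(1-6) a len m_nth c_nonneg
      by (simp add: m_def nth_transfer transfer_transfer S_def)
  qed
  ultimately show ?thesis using i(7) fpow_add[of n l i "nat (c!a)" "nat S" b] by auto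
qed

lemma crysB_prefix_reachable:
  assumes "0 < n" "a < 2*n" "c \<in> crysB_prefix n l (Suc a)"
  shows "\<exists>b\<in>crysB_prefix n l a. \<exists>k. fpow n l (idx n j (Suc a)) k b = Some c"
proof -
  consider "a = 0" | "0 < a" "a \<le> n" | "n < a" by linarith
  then show ?thesis
  proof cases
    case 1
    then show ?thesis using assms crysB_prefix_reachable_0 by (simp add: idx_def)
  qed (use assms crysB_prefix_reachable_low crysB_prefix_reachable_high in blast)+
qed

lemma Bset_eq_crysB_prefix:
  assumes "0 < n"
  shows "a \<le> 2*n \<Longrightarrow> Bset n l j a = crysB_prefix n l a"
proof (induction a)
  case 0
  then show ?case by (simp add: crysB_prefix_0 bbar_def)
next
  case (Suc a)
  then have IH: "Bset n l j a = crysB_prefix n l a" by simp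
  have "c \<in> crysB_prefix n l (Suc a)" if "b \<in> crysB_prefix n l a" "fpow n l (idx n j (Suc a)) k b = Some c"
    for b k c
  proof (rule fpow_invariant[where S = "crysB_prefix n l (Suc a)"])
    show "c' \<in> crysB_prefix n l (Suc a)"
      if "b' \<in> crysB_prefix n l (Suc a)" "ftil n l (idx n j (Suc a)) b' = Some c'" for b' c'
      using ftil_idx_preserves_crysB_prefix[OF assms _ that] Suc.prems by simp
    show "b \<in> crysB_prefix n l (Suc a)" using crysB_prefix_mono[of a "Suc a" n l] that(1) by auto
  qed (rule that(2))
  then show ?case using IH crysB_prefix_reachable[OF assms] Suc.prems by auto
qed

lemma eps_nonneg: "b \<in> crysB n l \<Longrightarrow> 0 < i \<Longrightarrow> i \<le> n \<Longrightarrow> 0 \<le> eps n l i b"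
  by (auto simp: eps_def crysB_iff xbar_def pos_def)

lemma lamh_le_eps_Bset:
  assumes "0 < n" "0 < a" "a \<le> 2*n" "b \<in> Bset n l j (a-1)"
  shows "lamh l j (idx n j a) \<le> eps n l (idx n j a) b"
proof (cases "a = 1")
  case True
  then show ?thesis using assms
    by (simp add: idx_def lamh_def eps_def bbar_def sB_def sum_list_replicate xc_def xbar_def pos_def)
next
  case False
  then have "0 < idx n j a" "idx n j a \<le> n" using assms by (auto simp: idx_def)
  moreover have "b \<in> crysB n l"
    using assms Bset_eq_crysB_prefix[OF assms(1), of "a-1"] by (auto simp: crysB_prefix_def)
  ultimately show ?thesis using eps_nonneg by (simp add: lamh_def)
qed

section \<open>The elements b^(j)_a\<close>

definition spike :: "nat \<Rightarrow> nat \<Rightarrow> nat \<Rightarrow> int list" where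
  "spike n l p = (replicate (2*n) 0)[p := 2 * int l]"

lemma nth_spike:
  "p < 2*n \<Longrightarrow> q < 2*n \<Longrightarrow> spike n l p ! q = (if q = p then 2 * int l else 0)"
  by (simp add: spike_def nth_list_update)

lemma length_spike [simp]: "length (spike n l p) = 2*n"
  by (simp add: spike_def)

lemma sum_list_spike: "p < 2*n \<Longrightarrow> sum_list (spike n l p) = 2 * int l"
  by (simp add: spike_def sum_list_list_update sum_list_replicate)

lemma spike_in_crysB: "p < 2*n \<Longrightarrow> spike n l p \<in> crysB n l"
  unfolding spike_def by (rule replicate_update_in_crysB) auto

lemma transfer_spike:
  "Suc p < 2*n \<Longrightarrow> transfer (spike n l p) p (2 * int l) = spike n l (Suc p)"
  by (rule nth_equalityI) (simp_all add: nth_transfer nth_spike)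

lemma phi_idx_spike:
  assumes "0 < a" "a < 2*n"
  shows "phi n l (idx n j (Suc a)) (spike n l (a-1)) = 2 * int l"
proof -
  consider "a < n" | "a = n" | "n < a" by linarith
  then show ?thesis
    by cases (use assms in \<open>auto simp: phi_def idx_def xc_def xbar_def nth_spike pos_def\<close>)
qed

lemma fpow_idx_spike:
  assumes "0 < a" "a < 2*n"
  shows "fpow n l (idx n j (Suc a)) (2*l) (spike n l (a-1)) = Some (spike n l a)"
proof -
  have pos: "Suc (a-1) = a" using assms by simp
  have "fraw n (idx n j (Suc a)) (transfer (spike n l (a-1)) (a-1) (int s))
      = transfer (transfer (spike n l (a-1)) (a-1) (int s)) (a-1) 1" if "s < 2*l" for s
  proof -
    let ?b = "transfer (spike n l (a-1)) (a-1) (int s)"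
    have "?b!(2*n-a-1) \<le> ?b!a" if "a < n"
    proof -
      have "a < 2*n-a-1" using that by simp
      then show ?thesis using assms by (auto simp: nth_transfer nth_spike)
    qed
    moreover have "?b!(2*n-a) < ?b!(a-1)" if "n < a"
      using that assms \<open>s < 2*l\<close> by (auto simp: nth_transfer nth_spike)
    ultimately show ?thesis using fraw_idx_transfer[of a n ?b j] assms by simp
  qed
  then show ?thesis
    using fpow_transfer[OF spike_in_crysB[of "a-1" n l], where p = "a-1" and k = "2*l"] transfer_spike[of "a-1" n l] assms
    by (simp add: nth_spike)
qed

lemma bseq_eq_spike:
  assumes "0 < n"
  shows "0 < a \<Longrightarrow> a \<le> 2*n \<Longrightarrow> bseq n l j a = Some (spike n l (a-1))"
proof (induction a)
  case (Suc a)
  show ?case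
  proof (cases "a = 0")
    case True
    have "phi n l 0 (replicate (2*n) 0) = int l"
      using assms by (simp add: phi_def sB_def xc_def xbar_def sum_list_replicate pos_def)
    then show ?thesis
      using True assms fpow_0_raise_x1[OF assms, of l l] by (simp add: idx_def bbar_def spike_def)
  next
    case False
    then show ?thesis
      using Suc phi_idx_spike[of a n l j] fpow_idx_spike[of a n l j] by (simp add: nat_mult_distrib)
  qed
qed simp

lemma fpow_0_lower_xbar1:
  assumes "0 < n"
  shows "k \<le> l \<Longrightarrow>
    fpow n l 0 k (spike n l (2*n-1)) = Some ((replicate (2*n) 0)[2*n-1 := 2 * int (l - k)])"
proof (induction k)
  case (Suc k)
  let ?b = "(replicate (2*n) 0)[2*n-1 := 2 * int (l - k)]"
  have "fraw n 0 ?b = (replicate (2*n) 0)[2*n-1 := 2 * int (l - Suc k)]"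
    using assms Suc.prems fraw_0_lower[of ?b n] by (simp add: of_nat_diff algebra_simps)
  then show ?case
    using Suc assms ftil_eq_SomeI[of ?b n l 0] replicate_update_in_crysB[of "2*n-1" n] by simp
qed (simp add: spike_def)

lemma fpow_0_last_spike:
  assumes "0 < n"
  shows "fpow n l 0 l (spike n l (2*n-1)) = Some (replicate (2*n) 0)"
proof -
  have "(replicate (2*n) 0)[2*n-1 := 0] = replicate (2*n) (0::int)"
    by (auto intro!: nth_equalityI simp: nth_list_update)
  then show ?thesis using fpow_0_lower_xbar1[OF assms, of l l] by simp
qed

lemma phi_idx_next_spike:
  assumes "0 < a" "a \<le> 2*n"
  shows "phi n l (idx_next n j a) (spike n l (a-1)) = 2 * int l"
proof (cases "a < 2*n")
  case True
  then show ?thesis using phi_idx_spike[of a n l j] assms by (simp add: idx_next_def)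
next
  case False
  then show ?thesis using assms
    by (simp add: idx_next_def idx_def phi_def sB_def sum_list_spike xc_def xbar_def nth_spike pos_def)
qed

lemma eps_idx_next_spike:
  assumes "0 < a" "a \<le> 2*n"
  shows "eps n l (idx_next n j a) (spike n l (a-1)) = 0"
proof -
  consider "a < n" | "a = n" | "n < a" "a < 2*n" | "a = 2*n" using assms by linarith
  then show ?thesis
    by cases (use assms in \<open>auto simp: eps_def idx_next_def idx_def sB_def sum_list_spike
        xc_def xbar_def nth_spike pos_def\<close>)
qed

lemma xc_spike:
  "p < 2*n \<Longrightarrow> 0 < i \<Longrightarrow> i \<le> n \<Longrightarrow> xc (spike n l p) i = (if p = i - 1 then 2 * int l else 0)"
  by (auto simp: xc_def nth_spike)

lemma xbar_spike:
  "p < 2*n \<Longrightarrow> 0 < i \<Longrightarrow> i \<le> n \<Longrightarrow> xbar n (spike n l p) i = (if p = 2*n - i then 2 * int l else 0)"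
  by (auto simp: xbar_def nth_spike)

theorem mainTheorem8:
  fixes n l :: nat
  assumes "n \<ge> 2" and "l \<ge> 1"
  shows
    \<comment> \<open>(II)\<close>
    "(\<forall>j\<ge>1. Bset n l j (2*n) = crysB n l)
     \<comment> \<open>(III)\<close>
     \<and> (\<forall>j\<ge>1. \<forall>a\<in>{1..2*n}. \<forall>b\<in>Bset n l j (a-1).
           lamh l j (idx n j a) \<le> eps n l (idx n j a) b)
     \<comment> \<open>(IV')\<close>
     \<and> (\<forall>j\<ge>1. \<forall>a\<in>{1..2*n}. \<exists>c. bseq n l j a = Some c
           \<and> eps n l (idx_next n j a) c = 0 \<and> phi n l (idx_next n j a) c > 0)
     \<and> (\<forall>j\<ge>1. bseq n l (j+1) 0 =
           Option.bind (bseq n l j (2*n))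
             (fpow n l (idx n (j+1) 1) (nat (lamh l (j+1) (idx n (j+1) 1)))))
     \<comment> \<open>explicit description of the sets\<close>
     \<and> (\<forall>j\<ge>1. Bset n l j 0 = {replicate (2*n) 0})
     \<and> (\<forall>j\<ge>1. \<forall>a\<in>{1..n}. Bset n l j a =
           {b\<in>crysB n l. (\<forall>i\<in>{a+1..n}. xc b i = 0) \<and> (\<forall>i\<in>{1..n}. xbar n b i = 0)})
     \<and> (\<forall>j\<ge>1. \<forall>a\<in>{1..n-1}. Bset n l j (n+a) =
           {b\<in>crysB n l. \<forall>i\<in>{1..n-a}. xbar n b i = 0})
     \<comment> \<open>explicit description of the elements b^(j)_a\<close>
     \<and> (\<forall>j\<ge>1. bseq n l j 0 = Some (replicate (2*n) 0))
     \<and> (\<forall>j\<ge>1. \<forall>a\<in>{1..n}. \<exists>c. bseq n l j a = Some c \<and> length c = 2*n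
           \<and> xc c a = 2 * int l \<and> (\<forall>i\<in>{1..n}. i \<noteq> a \<longrightarrow> xc c i = 0)
           \<and> (\<forall>i\<in>{1..n}. xbar n c i = 0))
     \<and> (\<forall>j\<ge>1. \<forall>a\<in>{1..n}. \<exists>c. bseq n l j (n+a) = Some c \<and> length c = 2*n
           \<and> xbar n c (n-a+1) = 2 * int l \<and> (\<forall>i\<in>{1..n}. xc c i = 0)
           \<and> (\<forall>i\<in>{1..n}. i \<noteq> n-a+1 \<longrightarrow> xbar n c i = 0))"
proof -
  have n: "0 < n" using assms(1) by simp
  note Bset = Bset_eq_crysB_prefix[OF n] and bseq = bseq_eq_spike[OF n]
  show ?thesis
    apply (intro conjI)
    subgoal using Bset crysB_prefix_2n by simp
    subgoal using lamh_le_eps_Bset[OF n] by simp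
    subgoal using bseq eps_idx_next_spike phi_idx_next_spike assms(2) by simp
    subgoal using bseq[of "2*n"] fpow_0_last_spike[OF n] n by (simp add: idx_def lamh_def bbar_def)
    subgoal by (simp add: bbar_def)
    subgoal using Bset crysB_prefix_low by simp
    subgoal using Bset crysB_prefix_high by fastforce
    subgoal by (simp add: bbar_def)
    subgoal using bseq by (auto simp: xc_spike xbar_spike; arith)
    subgoal using bseq by (auto simp: xc_spike xbar_spike; arith)
    done
qed

end
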